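(* Let $R=k[x_1,\dots,x_n]$ be graded by a monoid $P$, let $e_1,\dots,e_m$ be variables of $R$ with $\deg(e_i)=\underline e_i\in P$, let $Q^1,\dots,Q^m$ and $J^1,\dots,J^m$ be $P$-homogeneous ideals with $Q^i\subseteq J^i$, and let $s(t)=\sum_{D\in P}S_Dt^D$ be a power series. Suppose: (1) $HS(J^i,t)=s(t)$ for all $i$; (2) for each $i$, $e_i$ is a nonzerodivisor in $R/Q^i$; (3) all the $Q^i$ have a common Hilbert function; (4) for every $D\in P$ there exist an index $j$ and natural numbers $a_1,\dots,a_m$ such that $\dim_k Q^j_{D+\sum_ia_i\underline e_i}=S_{D+\sum_ia_i\underline e_i}$. Then $Q^i=J^i$ for all $i$.
   Context: $R$ is graded by a monoid $P$ such that every monomial is $P$-homogeneous, the $P$-grading refines the standard grading, and each graded piece is finite dimensional. For a $P$-homogeneous ideal $I$, $I_D$ is its degree-$D$ piece and $HS(I,t)=\sum_{D\in P}\dim_k(I_D)\,t^D$; the Hilbert function of $I$ is $D\mapsto\dim_k I_D$. *)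

theory Defs
  imports Main HOL.Vector_Spaces "HOL-Library.Poly_Mapping"
begin

text \<open>Polynomial ring R = k[x_v : v in 'v] with 'v a finite type of variables:
  a polynomial is a finitely supported map from monomials (exponent vectors
  'v =>0 nat) to coefficients in the field 'k.\<close>

type_synonym ('v, 'k) mpoly = "('v \<Rightarrow>\<^sub>0 nat) \<Rightarrow>\<^sub>0 'k"

definition Var :: "'v \<Rightarrow> ('v, 'k::comm_ring_1) mpoly" where
  "Var v = Poly_Mapping.single (Poly_Mapping.single v 1) 1"

definition kscale :: "'k::field \<Rightarrow> ('v, 'k) mpoly \<Rightarrow> ('v, 'k) mpoly" where
  "kscale c f = Poly_Mapping.map (\<lambda>x. c * x) f"

definition kdim :: "('v, 'k::field) mpoly set \<Rightarrow> nat" where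
  "kdim V = vector_space.dim kscale V"

definition tdeg :: "('v \<Rightarrow>\<^sub>0 nat) \<Rightarrow> nat" where
  "tdeg m = sum (Poly_Mapping.lookup m) (Poly_Mapping.keys m)"

text \<open>A grading of R by the commutative monoid 'p: every monomial m is homogeneous
  of degree deg m, degrees add under multiplication, the P-grading refines the
  standard grading, and each graded piece is finite dimensional
  (finitely many monomials of each degree).\<close>
definition monoid_grading :: "(('v \<Rightarrow>\<^sub>0 nat) \<Rightarrow> 'p::comm_monoid_add) \<Rightarrow> bool" where
  "monoid_grading deg \<longleftrightarrow>
     deg 0 = 0 \<and>
     (\<forall>m1 m2. deg (m1 + m2) = deg m1 + deg m2) \<and>
     (\<forall>m1 m2. deg m1 = deg m2 \<longrightarrow> tdeg m1 = tdeg m2) \<and>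
     (\<forall>D. finite {m. deg m = D})"

definition is_ideal :: "'a::comm_ring_1 set \<Rightarrow> bool" where
  "is_ideal I \<longleftrightarrow> 0 \<in> I \<and> (\<forall>f\<in>I. \<forall>g\<in>I. f + g \<in> I) \<and> (\<forall>r. \<forall>f\<in>I. r * f \<in> I)"

definition hcomp :: "(('v \<Rightarrow>\<^sub>0 nat) \<Rightarrow> 'p) \<Rightarrow> 'p \<Rightarrow> ('v, 'k::zero) mpoly \<Rightarrow> ('v, 'k) mpoly" where
  "hcomp deg D f = Poly_Mapping.Abs_poly_mapping
     (\<lambda>m. if deg m = D then Poly_Mapping.lookup f m else 0)"

definition homogeneous_ideal ::
  "(('v \<Rightarrow>\<^sub>0 nat) \<Rightarrow> 'p) \<Rightarrow> ('v, 'k::comm_ring_1) mpoly set \<Rightarrow> bool" where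
  "homogeneous_ideal deg I \<longleftrightarrow> is_ideal I \<and> (\<forall>f\<in>I. \<forall>D. hcomp deg D f \<in> I)"

definition graded_piece ::
  "(('v \<Rightarrow>\<^sub>0 nat) \<Rightarrow> 'p) \<Rightarrow> ('v, 'k::zero) mpoly set \<Rightarrow> 'p \<Rightarrow> ('v, 'k) mpoly set" where
  "graded_piece deg I D = {f \<in> I. \<forall>m \<in> Poly_Mapping.keys f. deg m = D}"

definition hilbert_fun ::
  "(('v \<Rightarrow>\<^sub>0 nat) \<Rightarrow> 'p) \<Rightarrow> ('v, 'k::field) mpoly set \<Rightarrow> 'p \<Rightarrow> nat" where
  "hilbert_fun deg I D = kdim (graded_piece deg I D)"

end

theory Submission
  imports Defs
begin

text \<open>Multiplication by a variable \<open>x\<close> of degree \<open>d\<close> maps \<open>J_D\<close> into \<open>J_(D+d)\<close>; when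
  \<open>x\<close> is a nonzerodivisor modulo \<open>Q \<subseteq> J\<close>, the induced map \<open>J_D/Q_D \<rightarrow> J_(D+d)/Q_(D+d)\<close> is
  injective, so \<open>dim J_D - dim Q_D\<close> can only grow when \<open>D\<close> is shifted by \<open>d\<close>.
  As all \<open>J\<^sup>i\<close> have Hilbert function \<open>S\<close> and all \<open>Q\<^sup>i\<close> a common Hilbert function \<open>h\<close>,
  the gap \<open>S - h\<close> is monotone along shifts by every \<open>deg e\<^sub>i\<close>. Condition (4) makes it vanish
  at some shift of any \<open>D\<close>, hence \<open>S_D \<le> h_D\<close>, i.e. \<open>Q\<^sup>i_D = J\<^sup>i_D\<close>; homogeneity then
  gives \<open>Q\<^sup>i = J\<^sup>i\<close>.\<close>

context vector_space
begin

definition finitely_spanned :: "'b set \<Rightarrow> bool" where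
  "finitely_spanned V \<longleftrightarrow> (\<exists>W. finite W \<and> V \<subseteq> span W)"

lemma finite_independent_if_finitely_spanned:
  assumes "finitely_spanned V" "independent B" "B \<subseteq> V"
  shows "finite B"
  using assms independent_span_bound unfolding finitely_spanned_def by blast

lemma card_le_dim_if_finitely_spanned:
  assumes "finitely_spanned V" "independent B" "B \<subseteq> V"
  shows "card B \<le> dim V"
proof -
  obtain B' where B': "B \<subseteq> B'" "B' \<subseteq> V" "independent B'" "V \<subseteq> span B'"
    using maximal_independent_subset_extend[OF assms(3,2)] by blast
  have "finite B'"
    using finite_independent_if_finitely_spanned[OF assms(1) B'(3,2)] .
  then show ?thesis
    using card_mono[OF _ B'(1)] basis_card_eq_dim[OF B'(2,4,3)] by simp
qed

lemma span_Int_span_subset_zero: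
  assumes "finite Y" "independent (X \<union> Y)" "X \<inter> Y = {}"
  shows "span X \<inter> span Y \<subseteq> {0}"
  using assms
proof (induction Y rule: finite_induct)
  case empty
  then show ?case by auto
next
  case (insert y Y)
  have "independent (X \<union> Y)"
    using insert.prems(1) independent_mono[of "X \<union> insert y Y" "X \<union> Y"] by auto
  then have IH: "span X \<inter> span Y \<subseteq> {0}"
    using insert by auto
  show ?case
  proof
    fix z assume z: "z \<in> span X \<inter> span (insert y Y)"
    then obtain k where k: "z - k *s y \<in> span Y" using span_insert by blast
    show "z \<in> {0}"
    proof (cases "k = 0")
      case True
      then show ?thesis using IH z k by auto
    next
      case False
      have "y = inverse k *s (z - (z - k *s y))"
        using False by (simp add: scale_right_diff_distrib)
      moreover have "z - (z - k *s y) \<in> span (X \<union> Y)"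
        using z k by (meson IntD1 span_diff span_mono sup_ge1 sup_ge2 subsetD)
      ultimately have "y \<in> span (X \<union> Y)" by (metis span_scale)
      then show ?thesis
        using insert.hyps(2) insert.prems independent_insert by auto
    qed
  qed
qed

lemma independent_Un_if_span_Int:
  assumes "finite Y" "independent X" "independent Y" "span X \<inter> span Y \<subseteq> {0}"
  shows "independent (X \<union> Y)"
  using assms
proof (induction Y rule: finite_induct)
  case empty
  then show ?case by auto
next
  case (insert y Y)
  have y_notin: "y \<notin> span Y" using insert independent_insert by auto
  have "span X \<inter> span Y \<subseteq> {0}" using insert.prems(3) span_mono[of Y "insert y Y"] by auto
  then have IH: "independent (X \<union> Y)" using insert independent_mono by blast
  have "y \<notin> span (X \<union> Y)"
  proof
    assume "y \<in> span (X \<union> Y)"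
    then obtain x z where xz: "y = x + z" "x \<in> span X" "z \<in> span Y" using span_Un by blast
    have "x = y - z" using xz by simp
    also have "y - z \<in> span (insert y Y)"
      using xz by (meson span_diff span_base insertI1 span_mono subset_insertI subsetD)
    finally have "x = 0" using xz insert.prems(3) by auto
    then show False using xz y_notin by simp
  qed
  then show ?case using IH independent_insertI by simp
qed

lemma exists_complement_basis:
  assumes "subspace Q" "subspace J" "Q \<subseteq> J" "finitely_spanned J"
  obtains C where "finite C" "independent C" "span C \<subseteq> J" "span C \<inter> Q \<subseteq> {0}"
    "J \<subseteq> span (Q \<union> C)" "card C + dim Q = dim J"
proof -
  obtain B0 where B0: "B0 \<subseteq> Q" "independent B0" "Q \<subseteq> span B0" "card B0 = dim Q"
    using basis_exists by blast
  obtain B where B: "B0 \<subseteq> B" "B \<subseteq> J" "independent B" "J \<subseteq> span B"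
    using maximal_independent_subset_extend[of B0 J] B0 assms(3) by blast
  have "finite B" using finite_independent_if_finitely_spanned[OF assms(4) B(3,2)] .
  define C where "C = B - B0"
  have "finite C" "finite B0" using \<open>finite B\<close> B(1) C_def finite_subset by auto
  have B_eq: "B = B0 \<union> C" using B(1) C_def by auto
  have "independent C" using independent_mono[OF B(3)] C_def by blast
  have "span B0 = Q" using B0 assms(1) span_subspace by blast
  moreover have "span C \<inter> span B0 \<subseteq> {0}"
  proof (rule span_Int_span_subset_zero)
    show "independent (C \<union> B0)" using B(3) B_eq by (simp add: Un_commute)
  qed (use \<open>finite B0\<close> C_def in auto)
  ultimately have "span C \<inter> Q \<subseteq> {0}" by simp
  moreover have "J \<subseteq> span (Q \<union> C)"
    using B(4) B0(1) B_eq span_mono[of B "Q \<union> C"] by auto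
  moreover have "card C + dim Q = dim J"
  proof -
    have "card B = card B0 + card C"
      unfolding B_eq using \<open>finite B0\<close> \<open>finite C\<close> C_def by (intro card_Un_disjoint) auto
    then show ?thesis using basis_card_eq_dim[OF B(2,4,3)] B0(4) by linarith
  qed
  moreover have "span C \<subseteq> J" using C_def B(2) assms(2) span_minimal by blast
  ultimately show ?thesis using that \<open>finite C\<close> \<open>independent C\<close> by blast
qed

lemma subspace_eq_if_dim_le:
  assumes "subspace Q" "subspace J" "Q \<subseteq> J" "finitely_spanned J" "dim J \<le> dim Q"
  shows "Q = J"
proof -
  obtain C where C: "finite C" "independent C" "span C \<subseteq> J" "span C \<inter> Q \<subseteq> {0}"
    "J \<subseteq> span (Q \<union> C)" "card C + dim Q = dim J"
    by (rule exists_complement_basis[OF assms(1-4)])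
  have "card C = 0" using C(6) assms(5) by linarith
  then have "C = {}" using C(1) by simp
  then have "J \<subseteq> Q" using C(5) assms(1) span_eq_iff by (metis sup_bot_right)
  then show ?thesis using assms(3) by blast
qed

lemma card_Un_if_span_Int:
  assumes "finite X" "finite Y" "independent Y" "span X \<inter> span Y \<subseteq> {0}"
  shows "card (X \<union> Y) = card X + card Y"
proof -
  have "X \<inter> Y \<subseteq> span X \<inter> span Y" by (intro Int_mono span_superset)
  then have "X \<inter> Y \<subseteq> {0}" using assms(4) by (rule order_trans)
  moreover have "0 \<notin> Y" using assms(3) dependent_zero by blast
  ultimately have "X \<inter> Y = {}" by auto
  then show ?thesis using card_Un_disjoint assms(1,2) by blast
qed

text \<open>The hypotheses say that \<open>\<phi>\<close> induces an injective map \<open>J/Q \<rightarrow> J'/Q'\<close>.\<close>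

lemma dim_diff_le_if_injective_modulo:
  assumes "Vector_Spaces.linear scale scale \<phi>"
    and "subspace Q" "subspace J" "Q \<subseteq> J" "finitely_spanned J"
    and "subspace Q'" "Q' \<subseteq> J'" "finitely_spanned J'"
    and "\<phi> ` J \<subseteq> J'"
    and "\<And>x. x \<in> J \<Longrightarrow> \<phi> x \<in> Q' \<Longrightarrow> x \<in> Q"
  shows "dim J + dim Q' \<le> dim Q + dim J'"
proof -
  interpret \<phi>: Vector_Spaces.linear scale scale \<phi> by fact
  obtain C where C: "finite C" "independent C" "span C \<subseteq> J" "span C \<inter> Q \<subseteq> {0}"
    "J \<subseteq> span (Q \<union> C)" "card C + dim Q = dim J"
    by (rule exists_complement_basis[OF assms(2-5)])
  have kernel: "x = 0" if "x \<in> span C" "\<phi> x \<in> Q'" for x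
    using that C(3,4) assms(10) by blast
  have inj: "inj_on \<phi> (span C)"
  proof (rule inj_onI)
    fix x y assume "x \<in> span C" "y \<in> span C" "\<phi> x = \<phi> y"
    then have "x - y = 0"
      using kernel[of "x - y"] span_diff \<phi>.diff subspace_0[OF assms(6)] by simp
    then show "x = y" by simp
  qed
  have indep: "independent (\<phi> ` C)" using \<phi>.independent_injective_image[OF C(2) inj] .
  obtain B where B: "B \<subseteq> Q'" "independent B" "Q' \<subseteq> span B" "card B = dim Q'"
    using basis_exists by blast
  have "finite B"
    using finite_independent_if_finitely_spanned[OF assms(8) B(2)] B(1) assms(7) by blast
  have "span B \<subseteq> Q'" using B(1) assms(6) span_minimal by blast
  have meet: "span (\<phi> ` C) \<inter> span B \<subseteq> {0}"
  proof
    fix v assume v: "v \<in> span (\<phi> ` C) \<inter> span B"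
    then obtain x where x: "x \<in> span C" "v = \<phi> x" using \<phi>.span_image by auto
    then have "x = 0" using kernel v \<open>span B \<subseteq> Q'\<close> by blast
    then show "v \<in> {0}" using x(2) \<phi>.zero by simp
  qed
  have "\<phi> ` C \<union> B \<subseteq> J'"
    using assms(7,9) B(1) C(3) span_superset by blast
  then have "card (\<phi> ` C \<union> B) \<le> dim J'"
    using card_le_dim_if_finitely_spanned[OF assms(8) independent_Un_if_span_Int[OF \<open>finite B\<close> indep B(2) meet]]
    by blast
  moreover have "card (\<phi> ` C \<union> B) = card C + card B"
    using card_Un_if_span_Int[OF finite_imageI[OF C(1)] \<open>finite B\<close> B(2) meet]
      card_image[OF inj_on_subset[OF inj span_superset]] by simp
  ultimately show ?thesis using C(6) B(4) by linarith
qed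

end

lemma kscale_eq_single_mult: "kscale c f = Poly_Mapping.single 0 c * f"
  unfolding kscale_def by (rule mult_map_scale_conv_mult)

interpretation kspace: vector_space "kscale :: 'k::field \<Rightarrow> ('v, 'k) mpoly \<Rightarrow> ('v, 'k) mpoly"
  unfolding vector_space_def kscale_eq_single_mult
  by (simp add: algebra_simps single_add mult_single mult.assoc[symmetric])

lemma linear_mult_left: "Vector_Spaces.linear kscale kscale (\<lambda>f. g * f)"
  unfolding Vector_Spaces.linear_iff
  by (simp add: kspace.vector_space_axioms distrib_left kscale_eq_single_mult mult.left_commute)

lemma is_ideal_sum:
  assumes "is_ideal I" "\<And>x. x \<in> A \<Longrightarrow> g x \<in> I"
  shows "sum g A \<in> I"
  using assms(2)
proof (induction A rule: infinite_finite_induct)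
  case (insert x A)
  then show ?case using assms(1) unfolding is_ideal_def by simp
qed (use assms(1) in \<open>simp_all add: is_ideal_def\<close>)

lemma graded_piece_mono: "I \<subseteq> J \<Longrightarrow> graded_piece deg I D \<subseteq> graded_piece deg J D"
  unfolding graded_piece_def by blast

lemma subspace_graded_piece:
  assumes "is_ideal I"
  shows "kspace.subspace (graded_piece deg I D)"
  unfolding kspace.subspace_def graded_piece_def
proof (intro conjI ballI allI)
  show "0 \<in> {f \<in> I. \<forall>m\<in>Poly_Mapping.keys f. deg m = D}"
    using assms unfolding is_ideal_def by simp
next
  fix f g assume "f \<in> {f \<in> I. \<forall>m\<in>Poly_Mapping.keys f. deg m = D}"
    "g \<in> {f \<in> I. \<forall>m\<in>Poly_Mapping.keys f. deg m = D}"
  then show "f + g \<in> {f \<in> I. \<forall>m\<in>Poly_Mapping.keys f. deg m = D}"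
    using assms keys_add[of f g] unfolding is_ideal_def by blast
next
  fix c f assume "f \<in> {f \<in> I. \<forall>m\<in>Poly_Mapping.keys f. deg m = D}"
  moreover have "Poly_Mapping.keys (kscale c f) \<subseteq> Poly_Mapping.keys f"
    unfolding kscale_eq_single_mult using keys_mult[of "Poly_Mapping.single 0 c" f] by (auto split: if_splits)
  ultimately show "kscale c f \<in> {f \<in> I. \<forall>m\<in>Poly_Mapping.keys f. deg m = D}"
    using assms unfolding is_ideal_def kscale_eq_single_mult by blast
qed

lemma sum_single_lookup: "(\<Sum>m\<in>Poly_Mapping.keys f. Poly_Mapping.single m (Poly_Mapping.lookup f m)) = f"
  by (rule poly_mapping_eqI) (simp add: lookup_sum lookup_single when_def in_keys_iff)

lemma finitely_spanned_graded_piece: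
  assumes "finite {m. deg m = D}"
  shows "kspace.finitely_spanned (graded_piece deg (I :: ('v, 'k::field) mpoly set) D)"
  unfolding kspace.finitely_spanned_def
proof (intro exI conjI)
  let ?W = "(\<lambda>m. Poly_Mapping.single m (1::'k)) ` {m. deg m = D}"
  show "finite ?W" using assms by simp
  show "graded_piece deg I D \<subseteq> kspace.span ?W"
  proof
    fix f assume f: "f \<in> graded_piece deg I D"
    have "f = (\<Sum>m\<in>Poly_Mapping.keys f. kscale (Poly_Mapping.lookup f m) (Poly_Mapping.single m 1))"
      unfolding kscale_def by (simp add: sum_single_lookup)
    also have "\<dots> \<in> kspace.span ?W"
      using f unfolding graded_piece_def
      by (intro kspace.span_sum kspace.span_scale kspace.span_base) auto
    finally show "f \<in> kspace.span ?W" .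
  qed
qed

lemma Var_mult_mem_graded_piece:
  fixes f :: "('v, 'k::comm_ring_1) mpoly"
  assumes "monoid_grading deg" "is_ideal I" "f \<in> graded_piece deg I D"
  shows "Var v * f \<in> graded_piece deg I (D + deg (Poly_Mapping.single v 1))"
proof -
  have "deg m = D + deg (Poly_Mapping.single v 1)" if m: "m \<in> Poly_Mapping.keys (Var v * f)" for m
  proof -
    obtain a b where "m = a + b" "a \<in> Poly_Mapping.keys (Var v :: ('v, 'k) mpoly)"
      "b \<in> Poly_Mapping.keys f"
      using m keys_mult by blast
    moreover have "Poly_Mapping.keys (Var v :: ('v, 'k) mpoly) \<subseteq> {Poly_Mapping.single v 1}"
      unfolding Var_def by simp
    ultimately show ?thesis
      using assms(1,3) unfolding monoid_grading_def graded_piece_def by (auto simp: add.commute)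
  qed
  moreover have "Var v * f \<in> I" using assms(2,3) unfolding is_ideal_def graded_piece_def by blast
  ultimately show ?thesis unfolding graded_piece_def by blast
qed

lemma hilbert_fun_gap_le_shift:
  fixes deg :: "('v \<Rightarrow>\<^sub>0 nat) \<Rightarrow> 'p::comm_monoid_add" and D :: 'p
  assumes grading: "monoid_grading deg" and ideals: "is_ideal Q" "is_ideal J" "Q \<subseteq> J"
    and nzd: "\<And>f. Var v * f \<in> Q \<Longrightarrow> f \<in> Q"
  defines "D' \<equiv> D + deg (Poly_Mapping.single v 1)"
  shows "hilbert_fun deg J D + hilbert_fun deg Q D' \<le> hilbert_fun deg Q D + hilbert_fun deg J D'"
  unfolding hilbert_fun_def kdim_def
proof (rule kspace.dim_diff_le_if_injective_modulo[OF linear_mult_left])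
  have "finite {m. deg m = E}" for E using grading by (simp add: monoid_grading_def)
  then show "kspace.finitely_spanned (graded_piece deg J D)"
    "kspace.finitely_spanned (graded_piece deg J D')"
    by (simp_all add: finitely_spanned_graded_piece)
  show "kspace.subspace (graded_piece deg Q D)" "kspace.subspace (graded_piece deg J D)"
    "kspace.subspace (graded_piece deg Q D')"
    using ideals by (simp_all add: subspace_graded_piece)
  show "graded_piece deg Q D \<subseteq> graded_piece deg J D" "graded_piece deg Q D' \<subseteq> graded_piece deg J D'"
    using ideals by (simp_all add: graded_piece_mono)
  show "(\<lambda>f. Var v * f) ` graded_piece deg J D \<subseteq> graded_piece deg J D'"
    using Var_mult_mem_graded_piece[OF grading ideals(2)] unfolding D'_def by blast
  show "f \<in> graded_piece deg Q D"
    if "f \<in> graded_piece deg J D" "Var v * f \<in> graded_piece deg Q D'" for f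
    using that nzd unfolding graded_piece_def by blast
qed

lemma graded_piece_eq_if_hilbert_fun_le:
  assumes grading: "monoid_grading deg" and ideals: "is_ideal Q" "is_ideal J" "Q \<subseteq> J"
    and "hilbert_fun deg J D \<le> hilbert_fun deg Q D"
  shows "graded_piece deg Q D = graded_piece deg J D"
proof (rule kspace.subspace_eq_if_dim_le)
  show "kspace.finitely_spanned (graded_piece deg J D)"
    using grading by (simp add: finitely_spanned_graded_piece monoid_grading_def)
  show "kspace.dim (graded_piece deg J D) \<le> kspace.dim (graded_piece deg Q D)"
    using assms(5) unfolding hilbert_fun_def kdim_def .
qed (use ideals in \<open>simp_all add: subspace_graded_piece graded_piece_mono\<close>)

lemma lookup_hcomp:
  "Poly_Mapping.lookup (hcomp deg D f) = (\<lambda>m. if deg m = D then Poly_Mapping.lookup f m else 0)"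
  unfolding hcomp_def
  by (rule lookup_Abs_poly_mapping, rule finite_subset[OF _ finite_lookup[of f]]) auto

lemma sum_hcomp: "(\<Sum>D \<in> deg ` Poly_Mapping.keys f. hcomp deg D f) = f"
  by (rule poly_mapping_eqI) (auto simp: lookup_sum lookup_hcomp in_keys_iff)

lemma hcomp_mem_graded_piece:
  assumes "homogeneous_ideal deg I" "f \<in> I"
  shows "hcomp deg D f \<in> graded_piece deg I D"
  using assms unfolding homogeneous_ideal_def graded_piece_def
  by (auto simp: in_keys_iff lookup_hcomp split: if_splits)

lemma homogeneous_ideal_subsetI:
  assumes "homogeneous_ideal deg J" "is_ideal I" "\<And>D. graded_piece deg J D \<subseteq> I"
  shows "J \<subseteq> I"
proof
  fix f assume "f \<in> J"
  then have "hcomp deg D f \<in> I" for D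
    using hcomp_mem_graded_piece[OF assms(1) \<open>f \<in> J\<close>] assms(3) by blast
  then have "(\<Sum>D \<in> deg ` Poly_Mapping.keys f. hcomp deg D f) \<in> I"
    by (rule is_ideal_sum[OF assms(2)])
  then show "f \<in> I" by (simp add: sum_hcomp)
qed

lemma le_shift_sum_const:
  fixes g :: "'p::comm_monoid_add \<Rightarrow> 'b::preorder"
  assumes "\<And>D. g D \<le> g (D + c)"
  shows "g D \<le> g (D + (\<Sum>_<(k::nat). c))"
proof (induction k)
  case (Suc k)
  also have "g (D + (\<Sum>_<k. c)) \<le> g (D + (\<Sum>_<k. c) + c)" by (rule assms)
  finally show ?case by (simp add: add.assoc)
qed simp

lemma le_shift_sum:
  fixes g :: "'p::comm_monoid_add \<Rightarrow> 'b::preorder" and a :: "nat \<Rightarrow> nat"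
  assumes "\<And>D k. k < n \<Longrightarrow> g D \<le> g (D + d k)"
  shows "g D \<le> g (D + (\<Sum>k<n. \<Sum>_<a k. d k))"
  using assms
proof (induction n arbitrary: D)
  case (Suc n)
  then have "g D \<le> g (D + (\<Sum>k<n. \<Sum>_<a k. d k))" by simp
  also have "\<dots> \<le> g (D + (\<Sum>k<n. \<Sum>_<a k. d k) + (\<Sum>_<a n. d n))"
    by (rule le_shift_sum_const) (simp add: Suc.prems)
  finally show ?case by (simp add: add.assoc)
qed simp

theorem mainTheorem15:
  fixes deg :: "('v::finite \<Rightarrow>\<^sub>0 nat) \<Rightarrow> 'p::comm_monoid_add"
    and m :: nat
    and e :: "nat \<Rightarrow> 'v"
    and Q J :: "nat \<Rightarrow> ('v, 'k::field) mpoly set"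
    and S :: "'p \<Rightarrow> nat"
  assumes grading: "monoid_grading deg"
    and homQ: "\<And>i. i < m \<Longrightarrow> homogeneous_ideal deg (Q i)"
    and homJ: "\<And>i. i < m \<Longrightarrow> homogeneous_ideal deg (J i)"
    and sub: "\<And>i. i < m \<Longrightarrow> Q i \<subseteq> J i"
    and HS: "\<And>i D. i < m \<Longrightarrow> hilbert_fun deg (J i) D = S D"
    and nzd: "\<And>i f. i < m \<Longrightarrow> Var (e i) * f \<in> Q i \<Longrightarrow> f \<in> Q i"
    and common: "\<And>i j D. i < m \<Longrightarrow> j < m \<Longrightarrow> hilbert_fun deg (Q i) D = hilbert_fun deg (Q j) D"
    and cond4: "\<And>D. \<exists>j < m. \<exists>a :: nat \<Rightarrow> nat.
        hilbert_fun deg (Q j) (D + (\<Sum>i<m. \<Sum>_<a i. deg (Poly_Mapping.single (e i) 1)))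
        = S (D + (\<Sum>i<m. \<Sum>_<a i. deg (Poly_Mapping.single (e i) 1)))"
  shows "\<forall>i < m. Q i = J i"
proof (intro allI impI)
  fix i assume "i < m"
  have ideal: "is_ideal (Q k)" "is_ideal (J k)" if "k < m" for k
    using homQ[OF that] homJ[OF that] by (simp_all add: homogeneous_ideal_def)
  define d where "d k = deg (Poly_Mapping.single (e k) 1)" for k
  define gap where "gap D = int (S D) - int (hilbert_fun deg (Q i) D)" for D
  have gap_shift: "gap D \<le> gap (D + d k)" if "k < m" for D k
    using hilbert_fun_gap_le_shift[where v = "e k" and D = D, OF grading ideal[OF that] sub[OF that] nzd[OF that]]
    unfolding gap_def d_def HS[OF that] common[OF that \<open>i < m\<close>] by linarith
  have "S D \<le> hilbert_fun deg (Q i) D" for D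
  proof -
    obtain j and a :: "nat \<Rightarrow> nat" where "j < m"
      and full: "hilbert_fun deg (Q j) (D + (\<Sum>k<m. \<Sum>_<a k. d k)) = S (D + (\<Sum>k<m. \<Sum>_<a k. d k))"
      using cond4[of D] unfolding d_def by blast
    have "gap D \<le> gap (D + (\<Sum>k<m. \<Sum>_<a k. d k))" by (rule le_shift_sum) (rule gap_shift)
    also have "\<dots> = 0" using full common[OF \<open>j < m\<close> \<open>i < m\<close>] unfolding gap_def by simp
    finally show ?thesis unfolding gap_def by simp
  qed
  then have "graded_piece deg (Q i) D = graded_piece deg (J i) D" for D
    using graded_piece_eq_if_hilbert_fun_le[OF grading ideal[OF \<open>i < m\<close>] sub[OF \<open>i < m\<close>]]
    HS[OF \<open>i < m\<close>] by simp
  then have "graded_piece deg (J i) D \<subseteq> Q i" for D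
    unfolding graded_piece_def by blast
  then have "J i \<subseteq> Q i"
    by (rule homogeneous_ideal_subsetI[OF homJ[OF \<open>i < m\<close>] ideal(1)[OF \<open>i < m\<close>]])
  with sub[OF \<open>i < m\<close>] show "Q i = J i" by blast
qed

end
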